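(* Let $G$ be a connected graph of order $n$ and let $k\ge\chi(G)$ be an integer. Then $\overline{\mathrm{scs}}(G,k)=n$ if and only if $k>\chi(G)$, and likewise $\overline{\mathrm{lcs}}(G,k)=n$ if and only if $k>\chi(G)$.
   Context: All graphs are finite and simple. For a graph $G=(V,E)$ and an integer $k\ge\chi(G)$, a proper $k$-colouring is a map $c:V\to[k]$ with $c(u)\neq c(v)$ for every edge $uv$. A set $S\subseteq V$ is a determining set for $(G,c)$ if there is no proper $k$-colouring $c'\neq c$ of $G$ with $c'(s)=c(s)$ for all $s\in S$. A critical set for $(G,c)$ is an inclusion-minimal determining set. $\mathrm{scs}(G,c)$ and $\mathrm{lcs}(G,c)$ are the sizes of a smallest resp. largest critical set for $(G,c)$. $\overline{\mathrm{scs}}(G,k)$ and $\overline{\mathrm{lcs}}(G,k)$ are the maxima of $\mathrm{scs}(G,c)$ resp. $\mathrm{lcs}(G,c)$ over all proper $k$-colourings $c$ of $G$. *)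

theory Defs
  imports Main
begin

definition simple_graph :: "'a set \<Rightarrow> ('a \<Rightarrow> 'a \<Rightarrow> bool) \<Rightarrow> bool" where
  "simple_graph V E \<longleftrightarrow> finite V \<and> (\<forall>u v. E u v \<longrightarrow> u \<in> V \<and> v \<in> V)
     \<and> (\<forall>u v. E u v \<longrightarrow> E v u) \<and> (\<forall>v. \<not> E v v)"

definition connected_graph :: "'a set \<Rightarrow> ('a \<Rightarrow> 'a \<Rightarrow> bool) \<Rightarrow> bool" where
  "connected_graph V E \<longleftrightarrow> V \<noteq> {} \<and> (\<forall>u\<in>V. \<forall>v\<in>V. E\<^sup>*\<^sup>* u v)"

definition proper_colouring :: "'a set \<Rightarrow> ('a \<Rightarrow> 'a \<Rightarrow> bool) \<Rightarrow> nat \<Rightarrow> ('a \<Rightarrow> nat) \<Rightarrow> bool" where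
  "proper_colouring V E k c \<longleftrightarrow> (\<forall>v\<in>V. c v \<in> {1..k})
     \<and> (\<forall>u\<in>V. \<forall>v\<in>V. E u v \<longrightarrow> c u \<noteq> c v)"

definition chromatic_number :: "'a set \<Rightarrow> ('a \<Rightarrow> 'a \<Rightarrow> bool) \<Rightarrow> nat" where
  "chromatic_number V E = (LEAST k. \<exists>c. proper_colouring V E k c)"

text \<open>Colourings are compared on V only (values outside V are irrelevant).\<close>
definition determining_set :: "'a set \<Rightarrow> ('a \<Rightarrow> 'a \<Rightarrow> bool) \<Rightarrow> nat \<Rightarrow> ('a \<Rightarrow> nat) \<Rightarrow> 'a set \<Rightarrow> bool" where
  "determining_set V E k c S \<longleftrightarrow> S \<subseteq> V \<and>
     \<not> (\<exists>c'. proper_colouring V E k c' \<and> (\<exists>v\<in>V. c' v \<noteq> c v) \<and> (\<forall>s\<in>S. c' s = c s))"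

definition critical_set :: "'a set \<Rightarrow> ('a \<Rightarrow> 'a \<Rightarrow> bool) \<Rightarrow> nat \<Rightarrow> ('a \<Rightarrow> nat) \<Rightarrow> 'a set \<Rightarrow> bool" where
  "critical_set V E k c S \<longleftrightarrow> determining_set V E k c S
     \<and> (\<forall>T. T \<subset> S \<longrightarrow> \<not> determining_set V E k c T)"

definition scs :: "'a set \<Rightarrow> ('a \<Rightarrow> 'a \<Rightarrow> bool) \<Rightarrow> nat \<Rightarrow> ('a \<Rightarrow> nat) \<Rightarrow> nat" where
  "scs V E k c = Min {card S | S. critical_set V E k c S}"

definition lcs :: "'a set \<Rightarrow> ('a \<Rightarrow> 'a \<Rightarrow> bool) \<Rightarrow> nat \<Rightarrow> ('a \<Rightarrow> nat) \<Rightarrow> nat" where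
  "lcs V E k c = Max {card S | S. critical_set V E k c S}"

definition scs_bar :: "'a set \<Rightarrow> ('a \<Rightarrow> 'a \<Rightarrow> bool) \<Rightarrow> nat \<Rightarrow> nat" where
  "scs_bar V E k = Max {scs V E k c | c. proper_colouring V E k c}"

definition lcs_bar :: "'a set \<Rightarrow> ('a \<Rightarrow> 'a \<Rightarrow> bool) \<Rightarrow> nat \<Rightarrow> nat" where
  "lcs_bar V E k = Max {lcs V E k c | c. proper_colouring V E k c}"

end

theory Submission
  imports Defs
begin

text \<open>If \<open>k > \<chi>(G)\<close>, take a colouring \<open>c\<close> with colours \<open>1..\<chi>(G)\<close>: every single vertex can be
recoloured \<open>k\<close>, so the only determining set of \<open>c\<close> is \<open>V\<close> and \<open>scs(G,c) = lcs(G,c) = n\<close>.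
If \<open>k = \<chi>(G)\<close>, every proper \<open>k\<close>-colouring has a vertex \<open>v\<close> with \<open>V - {v}\<close> determining:
otherwise every vertex has a free colour other than its own, and moving each vertex of
colour \<open>k\<close> to a free colour (they are pairwise non-adjacent) gives a \<open>(k-1)\<close>-colouring.
Hence no critical set is all of \<open>V\<close>, and all critical sets have fewer than \<open>n\<close> vertices.\<close>

lemma proper_colouring_mono:
  "proper_colouring V E k c \<Longrightarrow> k \<le> k' \<Longrightarrow> proper_colouring V E k' c"
  by (fastforce simp: proper_colouring_def)

lemma chromatic_number_le: "proper_colouring V E k c \<Longrightarrow> chromatic_number V E \<le> k"
  unfolding chromatic_number_def by (rule Least_le) blast

lemma proper_colouring_chromatic_number:
  assumes "finite V" and irrefl: "\<And>v. \<not> E v v"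
  shows "\<exists>c. proper_colouring V E (chromatic_number V E) c"
proof -
  obtain h where h: "bij_betw h V {0..<card V}"
    using ex_bij_betw_finite_nat[OF \<open>finite V\<close>] by blast
  have "proper_colouring V E (card V) (\<lambda>v. Suc (h v))"
    unfolding proper_colouring_def
  proof (intro conjI ballI impI notI)
    fix v assume "v \<in> V"
    then show "Suc (h v) \<in> {1..card V}" using h bij_betwE by fastforce
  next
    fix u v assume "u \<in> V" "v \<in> V" "E u v" "Suc (h u) = Suc (h v)"
    then have "u = v" using h by (auto simp: bij_betw_def dest: inj_onD)
    with \<open>E u v\<close> irrefl show False by blast
  qed
  then have "\<exists>k c. proper_colouring V E k c" by blast
  then show ?thesis unfolding chromatic_number_def by (rule LeastI_ex)
qed

lemma critical_set_subset: "critical_set V E k c S \<Longrightarrow> S \<subseteq> V"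
  by (simp add: critical_set_def determining_set_def)

lemma critical_set_exists:
  assumes "finite V"
  shows "\<exists>S. critical_set V E k c S"
proof -
  let ?P = "\<lambda>m. \<exists>S. determining_set V E k c S \<and> card S = m"
  have "?P (card V)" by (auto simp: determining_set_def)
  then obtain S where S: "determining_set V E k c S" "card S = (LEAST m. ?P m)"
    using LeastI[where P = ?P] by blast
  then have "finite S" using assms finite_subset by (auto simp: determining_set_def)
  have "\<not> determining_set V E k c T" if "T \<subset> S" for T
  proof
    assume "determining_set V E k c T"
    then have "card S \<le> card T" using S(2) by (auto intro: Least_le)
    moreover have "card T < card S" using \<open>T \<subset> S\<close> \<open>finite S\<close> psubset_card_mono by blast
    ultimately show False by simp
  qed
  with S(1) show ?thesis unfolding critical_set_def by blast
qed

lemma finite_critical_set_cards: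
  assumes "finite V"
  shows "finite {card S | S. critical_set V E k c S}"
proof -
  have "card S \<le> card V" if "critical_set V E k c S" for S
    using card_mono[OF assms critical_set_subset[OF that]] .
  then show ?thesis unfolding finite_nat_set_iff_bounded_le by blast
qed

lemma scs_attained:
  assumes "finite V"
  shows "\<exists>S. critical_set V E k c S \<and> scs V E k c = card S"
proof -
  have "scs V E k c \<in> {card S | S. critical_set V E k c S}"
    unfolding scs_def using critical_set_exists[OF assms, of E k c]
    by (intro Min_in[OF finite_critical_set_cards[OF assms]]) blast
  then show ?thesis by blast
qed

lemma lcs_attained:
  assumes "finite V"
  shows "\<exists>S. critical_set V E k c S \<and> lcs V E k c = card S"
proof -
  have "lcs V E k c \<in> {card S | S. critical_set V E k c S}"
    unfolding lcs_def using critical_set_exists[OF assms, of E k c]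
    by (intro Max_in[OF finite_critical_set_cards[OF assms]]) blast
  then show ?thesis by blast
qed

lemma scs_le_card: "finite V \<Longrightarrow> scs V E k c \<le> card V"
  using scs_attained critical_set_subset card_mono by metis

lemma lcs_le_card: "finite V \<Longrightarrow> lcs V E k c \<le> card V"
  using lcs_attained critical_set_subset card_mono by metis

lemma critical_set_psubset:
  assumes "v \<in> V" and "determining_set V E k c (V - {v})" and "critical_set V E k c S"
  shows "S \<subset> V"
proof -
  have "S \<noteq> V"
    using assms unfolding critical_set_def by blast
  with critical_set_subset[OF assms(3)] show ?thesis by blast
qed

lemma scs_less_card:
  "finite V \<Longrightarrow> v \<in> V \<Longrightarrow> determining_set V E k c (V - {v}) \<Longrightarrow> scs V E k c < card V"
  using scs_attained critical_set_psubset psubset_card_mono by metis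

lemma lcs_less_card:
  "finite V \<Longrightarrow> v \<in> V \<Longrightarrow> determining_set V E k c (V - {v}) \<Longrightarrow> lcs V E k c < card V"
  using lcs_attained critical_set_psubset psubset_card_mono by metis

lemma scs_eq_card:
  "finite V \<Longrightarrow> (\<And>S. critical_set V E k c S \<Longrightarrow> S = V) \<Longrightarrow> scs V E k c = card V"
  using scs_attained by metis

lemma lcs_eq_card:
  "finite V \<Longrightarrow> (\<And>S. critical_set V E k c S \<Longrightarrow> S = V) \<Longrightarrow> lcs V E k c = card V"
  using lcs_attained by metis

lemma finite_scs_values:
  "finite V \<Longrightarrow> finite {scs V E k c | c. proper_colouring V E k c}"
  unfolding finite_nat_set_iff_bounded_le using scs_le_card by blast

lemma finite_lcs_values:
  "finite V \<Longrightarrow> finite {lcs V E k c | c. proper_colouring V E k c}"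
  unfolding finite_nat_set_iff_bounded_le using lcs_le_card by blast

lemma scs_bar_eq_card:
  assumes "finite V" and "proper_colouring V E k c" and "scs V E k c = card V"
  shows "scs_bar V E k = card V"
  unfolding scs_bar_def
proof (rule Max_eqI[OF finite_scs_values[OF assms(1)]])
  show "card V \<in> {scs V E k c | c. proper_colouring V E k c}"
    using assms(2) unfolding assms(3)[symmetric] by blast
qed (use scs_le_card[OF assms(1)] in blast)

lemma lcs_bar_eq_card:
  assumes "finite V" and "proper_colouring V E k c" and "lcs V E k c = card V"
  shows "lcs_bar V E k = card V"
  unfolding lcs_bar_def
proof (rule Max_eqI[OF finite_lcs_values[OF assms(1)]])
  show "card V \<in> {lcs V E k c | c. proper_colouring V E k c}"
    using assms(2) unfolding assms(3)[symmetric] by blast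
qed (use lcs_le_card[OF assms(1)] in blast)

lemma scs_bar_less:
  assumes "finite V" and "proper_colouring V E k c\<^sub>0"
    and "\<And>c. proper_colouring V E k c \<Longrightarrow> scs V E k c < m"
  shows "scs_bar V E k < m"
proof -
  have "{scs V E k c | c. proper_colouring V E k c} \<noteq> {}" using assms(2) by blast
  then have "scs_bar V E k \<in> {scs V E k c | c. proper_colouring V E k c}"
    unfolding scs_bar_def by (rule Max_in[OF finite_scs_values[OF assms(1)]])
  then obtain c where "proper_colouring V E k c" "scs_bar V E k = scs V E k c" by blast
  with assms(3) show ?thesis by simp
qed

lemma lcs_bar_less:
  assumes "finite V" and "proper_colouring V E k c\<^sub>0"
    and "\<And>c. proper_colouring V E k c \<Longrightarrow> lcs V E k c < m"
  shows "lcs_bar V E k < m"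
proof -
  have "{lcs V E k c | c. proper_colouring V E k c} \<noteq> {}" using assms(2) by blast
  then have "lcs_bar V E k \<in> {lcs V E k c | c. proper_colouring V E k c}"
    unfolding lcs_bar_def by (rule Max_in[OF finite_lcs_values[OF assms(1)]])
  then obtain c where "proper_colouring V E k c" "lcs_bar V E k = lcs V E k c" by blast
  with assms(3) show ?thesis by simp
qed

lemma proper_colouring_recolour_fresh:
  assumes "proper_colouring V E k c" and "k < k'" and irrefl: "\<And>v. \<not> E v v"
  shows "proper_colouring V E k' (c(v := k'))"
  unfolding proper_colouring_def
proof (intro conjI ballI impI)
  fix u assume "u \<in> V"
  then have "c u \<in> {1..k}" using assms(1) by (simp add: proper_colouring_def)
  then show "(c(v := k')) u \<in> {1..k'}" using \<open>k < k'\<close> by auto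
next
  fix u w assume "u \<in> V" "w \<in> V" "E u w"
  then have "c u \<in> {1..k}" "c w \<in> {1..k}" "c u \<noteq> c w" "u \<noteq> w"
    using assms(1) irrefl by (auto simp: proper_colouring_def)
  then show "(c(v := k')) u \<noteq> (c(v := k')) w" using \<open>k < k'\<close> by auto
qed

lemma determining_set_spare_colour:
  assumes "proper_colouring V E k c" and "k < k'" and "\<And>v. \<not> E v v"
    and "determining_set V E k' c S"
  shows "S = V"
proof (rule ccontr)
  assume "S \<noteq> V"
  then obtain v where "v \<in> V" "v \<notin> S"
    using assms(4) by (auto simp: determining_set_def)
  moreover have "c v \<noteq> k'"
    using assms(1,2) \<open>v \<in> V\<close> by (fastforce simp: proper_colouring_def)
  ultimately show False
    using assms(4) proper_colouring_recolour_fresh[OF assms(1-3), of v]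
    unfolding determining_set_def by fastforce
qed

lemma free_colour_if_not_determining:
  assumes "proper_colouring V E k c" and "v \<in> V" and "\<not> determining_set V E k c (V - {v})"
    and irrefl: "\<And>v. \<not> E v v"
  shows "\<exists>j\<in>{1..k}. j \<noteq> c v \<and> (\<forall>u\<in>V. E v u \<longrightarrow> c u \<noteq> j)"
proof -
  obtain c' where c': "proper_colouring V E k c'" "\<exists>w\<in>V. c' w \<noteq> c w"
    and agree: "\<forall>u\<in>V - {v}. c' u = c u"
    using assms(3) unfolding determining_set_def by blast
  have "c' v \<noteq> c v" using c'(2) agree by blast
  moreover have "c' v \<in> {1..k}" using c'(1) \<open>v \<in> V\<close> by (simp add: proper_colouring_def)
  moreover have "c u \<noteq> c' v" if "u \<in> V" "E v u" for u
  proof -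
    have "u \<noteq> v" using irrefl \<open>E v u\<close> by blast
    then have "c u = c' u" using agree \<open>u \<in> V\<close> by simp
    moreover have "c' v \<noteq> c' u" using c'(1) that \<open>v \<in> V\<close> unfolding proper_colouring_def by blast
    ultimately show ?thesis by simp
  qed
  ultimately show ?thesis by blast
qed

lemma eliminate_top_colour:
  assumes c: "proper_colouring V E k c" and sym: "\<And>u v. E u v \<Longrightarrow> E v u"
    and free: "\<And>v. v \<in> V \<Longrightarrow> c v = k \<Longrightarrow> \<exists>j\<in>{1..<k}. \<forall>u\<in>V. E v u \<longrightarrow> c u \<noteq> j"
  shows "\<exists>c'. proper_colouring V E (k - 1) c'"
proof -
  obtain f where f: "\<And>v. v \<in> V \<Longrightarrow> c v = k \<Longrightarrow> f v \<in> {1..<k} \<and> (\<forall>u\<in>V. E v u \<longrightarrow> c u \<noteq> f v)"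
    using free by metis
  define c' where "c' v = (if c v = k then f v else c v)" for v
  have "proper_colouring V E (k - 1) c'"
    unfolding proper_colouring_def
  proof (intro conjI ballI impI)
    fix v assume "v \<in> V"
    then show "c' v \<in> {1..k - 1}"
      using c f[of v] by (auto simp: c'_def proper_colouring_def)
  next
    fix u v assume uv: "u \<in> V" "v \<in> V" "E u v"
    moreover have "c u \<noteq> c v" using c uv by (simp add: proper_colouring_def)
    ultimately show "c' u \<noteq> c' v"
      using f[of u] f[of v] sym[of u v] by (auto simp: c'_def)
  qed
  then show ?thesis by blast
qed

lemma optimal_colouring_determined_by_all_but_one:
  assumes "simple_graph V E" and "V \<noteq> {}"
    and c: "proper_colouring V E (chromatic_number V E) c"
  shows "\<exists>v\<in>V. determining_set V E (chromatic_number V E) c (V - {v})"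
proof (rule ccontr)
  let ?k = "chromatic_number V E"
  assume "\<not> ?thesis"
  moreover have irrefl: "\<And>v. \<not> E v v" and sym: "\<And>u v. E u v \<Longrightarrow> E v u"
    using assms(1) by (auto simp: simple_graph_def)
  ultimately have "\<exists>j\<in>{1..<?k}. \<forall>u\<in>V. E v u \<longrightarrow> c u \<noteq> j" if "v \<in> V" "c v = ?k" for v
    using free_colour_if_not_determining[OF c that(1) _ irrefl] that by fastforce
  then obtain c' where "proper_colouring V E (?k - 1) c'"
    using eliminate_top_colour[OF c sym] by blast
  moreover have "?k \<ge> 1"
    using c \<open>V \<noteq> {}\<close> by (fastforce simp: proper_colouring_def)
  ultimately show False using chromatic_number_le by fastforce
qed

theorem theorem5:
  fixes V :: "'a set" and E :: "'a \<Rightarrow> 'a \<Rightarrow> bool" and n k :: nat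
  assumes "simple_graph V E" and "connected_graph V E" and "card V = n"
    and "k \<ge> chromatic_number V E"
  shows "(scs_bar V E k = n \<longleftrightarrow> k > chromatic_number V E)
       \<and> (lcs_bar V E k = n \<longleftrightarrow> k > chromatic_number V E)"
proof -
  have fin: "finite V" and irrefl: "\<And>v. \<not> E v v"
    using assms(1) by (auto simp: simple_graph_def)
  have "V \<noteq> {}" using assms(2) by (simp add: connected_graph_def)
  obtain c\<^sub>0 where c\<^sub>0: "proper_colouring V E (chromatic_number V E) c\<^sub>0"
    using proper_colouring_chromatic_number[of V E, OF fin irrefl] by blast
  have c\<^sub>0k: "proper_colouring V E k c\<^sub>0"
    using proper_colouring_mono[OF c\<^sub>0 assms(4)] .
  show ?thesis
  proof (cases "chromatic_number V E < k")
    case True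
    have only_V: "S = V" if "critical_set V E k c\<^sub>0 S" for S
      using determining_set_spare_colour[OF c\<^sub>0 True irrefl] that by (simp add: critical_set_def)
    have "scs_bar V E k = card V"
      using scs_bar_eq_card[OF fin c\<^sub>0k scs_eq_card[OF fin only_V]] .
    moreover have "lcs_bar V E k = card V"
      using lcs_bar_eq_card[OF fin c\<^sub>0k lcs_eq_card[OF fin only_V]] .
    ultimately show ?thesis using True assms(3) by simp
  next
    case False
    then have k: "k = chromatic_number V E" using assms(4) by simp
    have less: "scs V E k c < card V" "lcs V E k c < card V" if c: "proper_colouring V E k c" for c
    proof -
      obtain v where "v \<in> V" "determining_set V E k c (V - {v})"
        using optimal_colouring_determined_by_all_but_one[OF assms(1) \<open>V \<noteq> {}\<close> c[unfolded k]]
        unfolding k by blast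
      then show "scs V E k c < card V" "lcs V E k c < card V"
        using scs_less_card[OF fin] lcs_less_card[OF fin] by blast+
    qed
    have "scs_bar V E k < card V" "lcs_bar V E k < card V"
      using scs_bar_less[OF fin c\<^sub>0k less(1)] lcs_bar_less[OF fin c\<^sub>0k less(2)] by blast+
    with False show ?thesis using assms(3) by simp
  qed
qed

end
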